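(* Let $p$ be a prime, $n \in \mathbb{N}$, and let $\Gamma = \bigoplus_{i \in I} \mathcal{C}(p^\infty)$ be a direct sum of copies of $\mathcal{C}(p^\infty)$ (over some index set $I$), regarded as a discrete abelian group. For $E \subset \Gamma$ let $E_{p^n} := \{\gamma^{p^{n-1}} : \gamma \in E\}$, and let $E_{1/p^n} := \{\xi_\gamma : \gamma \in E\}$ where, for each $\gamma \in E$, $\xi_\gamma \in \Gamma$ is an element with $\xi_\gamma^{p^{n-1}} = \gamma$. If $E$ is $p^n$-PR, then $E_{p^n}$ is $p$-PR and $|E_{p^n}| = |E|$. If $E$ is $p$-PR, then $E_{1/p^n}$ is $p^n$-PR and $|E_{1/p^n}| = |E|$.
   Context: $\mathcal{C}(p^\infty)$ denotes the group of all $p^m$-th roots of unity, $m \ge 1$. Group operation written multiplicatively. For a discrete abelian group $\Delta$ with compact dual $\widehat{\Delta}$ and $N \in \mathbb{N}$, a subset $E \subset \Delta$ is $N$-PR if for every function $\varphi: E \to \mathbb{Z}_N$ (the $N$-th roots of unity in the unit circle) there exists $x \in \widehat{\Delta}$ with $\varphi(\gamma) = \gamma(x)$ for all $\gamma \in E$. *)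

theory Defs
  imports Complex_Main "HOL-Library.Equipollence" "HOL-Computational_Algebra.Primes"
begin

definition prufer :: "nat \<Rightarrow> complex set" where
  "prufer p = {z. \<exists>m\<ge>1. z ^ (p ^ m) = 1}"

text \<open>Direct sum of copies of C(p^infinity) indexed by the set I: finitely supported
  functions I -> C(p^infinity) (value 1 outside I); group operation is pointwise product.\<close>
definition Gamma :: "nat \<Rightarrow> 'i set \<Rightarrow> ('i \<Rightarrow> complex) set" where
  "Gamma p I = {g. (\<forall>i\<in>I. g i \<in> prufer p) \<and> (\<forall>i. i \<notin> I \<longrightarrow> g i = 1)
                   \<and> finite {i. g i \<noteq> 1}}"

definition gmult :: "('i \<Rightarrow> complex) \<Rightarrow> ('i \<Rightarrow> complex) \<Rightarrow> ('i \<Rightarrow> complex)" where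
  "gmult g h = (\<lambda>i. g i * h i)"

definition gpow :: "('i \<Rightarrow> complex) \<Rightarrow> nat \<Rightarrow> ('i \<Rightarrow> complex)" where
  "gpow g k = (\<lambda>i. g i ^ k)"

text \<open>The dual group (Gamma discrete): homomorphisms from Gamma into the unit circle.
  For a character x, gamma(x) is the value x gamma.\<close>
definition dual :: "nat \<Rightarrow> 'i set \<Rightarrow> (('i \<Rightarrow> complex) \<Rightarrow> complex) set" where
  "dual p I = {x. (\<forall>g\<in>Gamma p I. \<forall>h\<in>Gamma p I. x (gmult g h) = x g * x h)
                  \<and> (\<forall>g\<in>Gamma p I. norm (x g) = 1)}"

definition roots_unity :: "nat \<Rightarrow> complex set" where
  "roots_unity N = {z. z ^ N = 1}"

definition PR :: "nat \<Rightarrow> 'i set \<Rightarrow> nat \<Rightarrow> ('i \<Rightarrow> complex) set \<Rightarrow> bool" where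
  "PR p I N E \<longleftrightarrow> E \<subseteq> Gamma p I \<and>
     (\<forall>\<phi>. (\<forall>\<gamma>\<in>E. \<phi> \<gamma> \<in> roots_unity N) \<longrightarrow>
        (\<exists>x\<in>dual p I. \<forall>\<gamma>\<in>E. \<phi> \<gamma> = x \<gamma>))"

end

theory Submission
  imports Defs
begin

text \<open>Characters turn powers into powers: \<open>x (\<gamma>^k) = (x \<gamma>)^k\<close>. So a function with values
  in the \<open>p\<close>-th roots of unity on the \<open>p^(n-1)\<close>-th powers of \<open>E\<close> is realised by a character
  once a choice of \<open>p^(n-1)\<close>-th roots of its values is realised on \<open>E\<close>; and a \<open>p^n\<close>-th
  root of unity that is not a \<open>p^(n-1)\<close>-th root separates any two points of \<open>E\<close> with equal
  \<open>p^(n-1)\<close>-th powers. Conversely, let \<open>E\<close> be \<open>p\<close>-PR and let \<open>\<phi>\<close> take \<open>p^n\<close>-th roots of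
  unity on the roots \<open>\<xi> \<gamma>\<close>. Then \<open>\<phi>^(p^(n-1))\<close> is realised on \<open>E\<close> by a character \<open>x\<^sub>0\<close>, so
  \<open>\<phi> / (x\<^sub>0 \<circ> \<xi>)\<close> takes \<open>p^(n-1)\<close>-th roots of unity; by induction on \<open>n\<close> it is realised on
  the roots \<open>(\<xi> \<gamma>)^p\<close> by a character \<open>z\<close>, and \<open>\<phi> = x\<^sub>0 \<cdot> z^p\<close> on the \<open>\<xi> \<gamma>\<close>.\<close>

lemma gpow_in_Gamma: "g \<in> Gamma p I \<Longrightarrow> gpow g k \<in> Gamma p I"
proof -
  assume g: "g \<in> Gamma p I"
  have "g i ^ k \<in> prufer p" if i: "i \<in> I" for i
  proof -
    obtain m where "m \<ge> 1" "g i ^ (p ^ m) = 1"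
      using g i by (auto simp: Gamma_def prufer_def)
    then have "(g i ^ k) ^ (p ^ m) = 1" by (metis power_mult mult.commute power_one)
    then show ?thesis using \<open>m \<ge> 1\<close> by (auto simp: prufer_def)
  qed
  moreover have "finite {i. g i ^ k \<noteq> 1}"
    using g by (auto simp: Gamma_def elim: rev_finite_subset)
  ultimately show ?thesis using g by (auto simp: Gamma_def gpow_def)
qed

lemma const_one_in_Gamma: "(\<lambda>i. 1) \<in> Gamma p I"
  by (auto simp: Gamma_def prufer_def intro: exI[of _ 1])

lemma gpow_gpow: "gpow (gpow g a) b = gpow g (a * b)"
  by (simp add: gpow_def power_mult)

lemma dual_mult: "x \<in> dual p I \<Longrightarrow> g \<in> Gamma p I \<Longrightarrow> h \<in> Gamma p I \<Longrightarrow> x (gmult g h) = x g * x h"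
  by (simp add: dual_def)

lemma dual_nonzero: "x \<in> dual p I \<Longrightarrow> g \<in> Gamma p I \<Longrightarrow> x g \<noteq> 0"
  by (auto simp: dual_def)

lemma dual_const_one:
  assumes x: "x \<in> dual p I"
  shows "x (\<lambda>i. 1) = 1"
proof -
  have "x (\<lambda>i. 1) * x (\<lambda>i. 1) = x (\<lambda>i. 1)"
    using dual_mult[OF x const_one_in_Gamma const_one_in_Gamma] by (simp add: gmult_def)
  then show ?thesis using dual_nonzero[OF x const_one_in_Gamma] by simp
qed

lemma dual_gpow:
  assumes x: "x \<in> dual p I" and g: "g \<in> Gamma p I"
  shows "x (gpow g k) = x g ^ k"
proof (induction k)
  case 0
  have "gpow g 0 = (\<lambda>i. 1)" by (simp add: gpow_def)
  then show ?case using dual_const_one[OF x] by simp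
next
  case (Suc k)
  have "gpow g (Suc k) = gmult g (gpow g k)" by (simp add: gpow_def gmult_def)
  then show ?case using Suc dual_mult[OF x g gpow_in_Gamma[OF g]] by simp
qed

lemma dual_mult_power:
  "x \<in> dual p I \<Longrightarrow> z \<in> dual p I \<Longrightarrow> (\<lambda>g. x g * z g ^ k) \<in> dual p I"
  unfolding dual_def by (auto simp: norm_mult norm_power power_mult_distrib)

lemma complex_nth_root_exists:
  assumes "k > 0"
  shows "\<exists>w::complex. w ^ k = c"
proof (cases "c = 0")
  case True
  then show ?thesis using assms by (intro exI[of _ 0]) simp
next
  case False
  then have "card {w::complex. w ^ k = c} > 0" using assms by (simp add: card_nth_roots)
  then show ?thesis by (auto simp: card_gt_0_iff)
qed

lemma root_unity_power_ne_1_exists: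
  assumes "N > 0" and "\<not> N dvd k"
  shows "\<exists>w::complex. w ^ N = 1 \<and> w ^ k \<noteq> 1"
proof (intro exI conjI)
  let ?w = "cis (2 * pi / N)"
  show "?w ^ N = 1" using assms by (simp add: DeMoivre)
  show "?w ^ k \<noteq> 1"
  proof
    assume "?w ^ k = 1"
    then have "cos (k * (2 * pi) / N) = 1" by (simp add: DeMoivre complex_eq_iff)
    then obtain m :: int where "k * (2 * pi) / N = real_of_int m * 2 * pi" using cos_one_2pi_int by blast
    then have "real_of_int (int k) = real_of_int (m * int N)" using assms(1) by (simp add: field_simps)
    then have "int k = int N * m" by (simp only: of_int_eq_iff mult.commute)
    then have "N dvd k" by (metis dvd_triv_left int_dvd_int_iff)
    with assms(2) show False ..
  qed
qed

lemma PR_gpow_image: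
  assumes PR: "PR p I (k * M) E" and "k > 0"
  shows "PR p I M ((\<lambda>\<gamma>. gpow \<gamma> k) ` E)"
  unfolding PR_def
proof (intro conjI allI impI)
  have E: "\<gamma> \<in> Gamma p I" if "\<gamma> \<in> E" for \<gamma> using PR that by (auto simp: PR_def)
  then show "(\<lambda>\<gamma>. gpow \<gamma> k) ` E \<subseteq> Gamma p I" using gpow_in_Gamma by blast
  fix \<psi> assume \<psi>: "\<forall>\<gamma>\<in>(\<lambda>\<gamma>. gpow \<gamma> k) ` E. \<psi> \<gamma> \<in> roots_unity M"
  have "\<forall>\<gamma>. \<exists>w. w ^ k = \<psi> (gpow \<gamma> k)"
    using complex_nth_root_exists[OF \<open>k > 0\<close>] by blast
  then obtain \<phi> where \<phi>: "\<forall>\<gamma>. \<phi> \<gamma> ^ k = \<psi> (gpow \<gamma> k)" by metis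
  have "\<forall>\<gamma>\<in>E. \<phi> \<gamma> \<in> roots_unity (k * M)"
    using \<phi> \<psi> by (simp add: roots_unity_def power_mult)
  then obtain x where x: "x \<in> dual p I" "\<forall>\<gamma>\<in>E. \<phi> \<gamma> = x \<gamma>"
    using PR by (auto simp: PR_def)
  have "\<psi> (gpow \<gamma> k) = x (gpow \<gamma> k)" if "\<gamma> \<in> E" for \<gamma>
    using \<phi> x(2) dual_gpow[OF x(1) E[OF that]] that by metis
  then have "\<forall>\<gamma>\<in>(\<lambda>\<gamma>. gpow \<gamma> k) ` E. \<psi> \<gamma> = x \<gamma>" by blast
  with x(1) show "\<exists>x\<in>dual p I. \<forall>\<gamma>\<in>(\<lambda>\<gamma>. gpow \<gamma> k) ` E. \<psi> \<gamma> = x \<gamma>" by blast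
qed

lemma PR_inj_on_gpow:
  assumes PR: "PR p I N E" and "N > 0" and "\<not> N dvd k"
  shows "inj_on (\<lambda>\<gamma>. gpow \<gamma> k) E"
proof (rule inj_onI, rule ccontr)
  fix a b assume ab: "a \<in> E" "b \<in> E" "gpow a k = gpow b k" "a \<noteq> b"
  obtain w :: complex where w: "w ^ N = 1" "w ^ k \<noteq> 1"
    using root_unity_power_ne_1_exists assms(2,3) by blast
  have "\<forall>\<gamma>\<in>E. (if \<gamma> = b then w else 1) \<in> roots_unity N" using w by (simp add: roots_unity_def)
  then obtain x where x: "x \<in> dual p I" "\<forall>\<gamma>\<in>E. (if \<gamma> = b then w else 1) = x \<gamma>"
    using PR by (auto simp: PR_def)
  have "x a = 1" "x b = w" using x(2) ab by auto
  have E: "E \<subseteq> Gamma p I" using PR by (simp add: PR_def)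
  have "x a ^ k = x (gpow a k)" using dual_gpow[OF x(1)] ab(1) E by auto
  also have "\<dots> = x b ^ k" using dual_gpow[OF x(1)] ab(2,3) E by auto
  finally show False using \<open>x a = 1\<close> \<open>x b = w\<close> w(2) by simp
qed

lemma PR_realise_on_roots:
  assumes PR: "PR p I N E"
    and \<xi>: "\<forall>\<gamma>\<in>E. \<xi> \<gamma> \<in> Gamma p I \<and> gpow (\<xi> \<gamma>) (N ^ m) = \<gamma>"
    and \<phi>: "\<forall>\<gamma>\<in>E. \<phi> \<gamma> ^ (N ^ Suc m) = 1"
  shows "\<exists>x\<in>dual p I. \<forall>\<gamma>\<in>E. \<phi> \<gamma> = x (\<xi> \<gamma>)"
  using \<xi> \<phi>
proof (induction m arbitrary: \<xi> \<phi>)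
  case 0
  then have "\<forall>\<gamma>\<in>E. \<xi> \<gamma> = \<gamma>" by (simp add: gpow_def)
  moreover obtain x where "x \<in> dual p I" "\<forall>\<gamma>\<in>E. \<phi> \<gamma> = x \<gamma>"
    using PR 0 by (auto simp: PR_def roots_unity_def)
  ultimately show ?case by auto
next
  case (Suc m)
  have \<xi>_Gamma: "\<xi> \<gamma> \<in> Gamma p I" if "\<gamma> \<in> E" for \<gamma> using Suc.prems(1) that by blast
  have "\<forall>\<gamma>\<in>E. \<phi> \<gamma> ^ N ^ Suc m \<in> roots_unity N"
    using Suc.prems(2) by (simp add: roots_unity_def power_mult[symmetric] mult.commute)
  then obtain x0 where x0: "x0 \<in> dual p I" "\<forall>\<gamma>\<in>E. \<phi> \<gamma> ^ N ^ Suc m = x0 \<gamma>"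
    using PR by (auto simp: PR_def)
  have x0_\<xi>: "x0 \<gamma> = x0 (\<xi> \<gamma>) ^ N ^ Suc m" if "\<gamma> \<in> E" for \<gamma>
    using dual_gpow[OF x0(1) \<xi>_Gamma[OF that]] Suc.prems(1) that by metis
  define r where "r \<gamma> = \<phi> \<gamma> / x0 (\<xi> \<gamma>)" for \<gamma>
  have "\<forall>\<gamma>\<in>E. r \<gamma> ^ N ^ Suc m = 1"
    using x0(2) x0_\<xi> dual_nonzero[OF x0(1) \<xi>_Gamma] by (simp add: r_def power_divide)
  moreover have "\<forall>\<gamma>\<in>E. gpow (\<xi> \<gamma>) N \<in> Gamma p I \<and> gpow (gpow (\<xi> \<gamma>) N) (N ^ m) = \<gamma>"
    using Suc.prems(1) \<xi>_Gamma by (simp add: gpow_gpow gpow_in_Gamma)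
  ultimately obtain z where z: "z \<in> dual p I" "\<forall>\<gamma>\<in>E. r \<gamma> = z (gpow (\<xi> \<gamma>) N)"
    using Suc.IH[of "\<lambda>\<gamma>. gpow (\<xi> \<gamma>) N" r] by blast
  have "\<phi> \<gamma> = x0 (\<xi> \<gamma>) * z (\<xi> \<gamma>) ^ N" if "\<gamma> \<in> E" for \<gamma>
    using z(2) that dual_gpow[OF z(1) \<xi>_Gamma[OF that]] dual_nonzero[OF x0(1) \<xi>_Gamma[OF that]]
    by (auto simp: r_def field_simps)
  then show ?case by (intro bexI[OF _ dual_mult_power[OF x0(1) z(1), of N]]) simp
qed

lemma PR_root_image:
  assumes PR: "PR p I N E"
    and \<xi>: "\<forall>\<gamma>\<in>E. \<xi> \<gamma> \<in> Gamma p I \<and> gpow (\<xi> \<gamma>) (N ^ m) = \<gamma>"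
  shows "PR p I (N ^ Suc m) (\<xi> ` E)"
  unfolding PR_def
proof (intro conjI allI impI)
  show "\<xi> ` E \<subseteq> Gamma p I" using \<xi> by auto
  fix \<phi> assume "\<forall>\<gamma>\<in>\<xi> ` E. \<phi> \<gamma> \<in> roots_unity (N ^ Suc m)"
  then have "\<forall>\<gamma>\<in>E. (\<phi> \<circ> \<xi>) \<gamma> ^ N ^ Suc m = 1" by (simp add: roots_unity_def)
  then obtain x where "x \<in> dual p I" "\<forall>\<gamma>\<in>E. (\<phi> \<circ> \<xi>) \<gamma> = x (\<xi> \<gamma>)"
    using PR_realise_on_roots[OF PR \<xi>] by blast
  then show "\<exists>x\<in>dual p I. \<forall>\<gamma>\<in>\<xi> ` E. \<phi> \<gamma> = x \<gamma>" by auto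
qed

theorem corollary3p3:
  fixes p n :: nat and I :: "'i set" and E :: "('i \<Rightarrow> complex) set"
  assumes "prime p" and "n \<ge> 1" and "E \<subseteq> Gamma p I"
  shows "(PR p I (p ^ n) E \<longrightarrow>
            PR p I p ((\<lambda>\<gamma>. gpow \<gamma> (p ^ (n - 1))) ` E)
            \<and> (\<lambda>\<gamma>. gpow \<gamma> (p ^ (n - 1))) ` E \<approx> E)
       \<and> (PR p I p E \<longrightarrow>
            (\<forall>\<xi>. (\<forall>\<gamma>\<in>E. \<xi> \<gamma> \<in> Gamma p I \<and> gpow (\<xi> \<gamma>) (p ^ (n - 1)) = \<gamma>) \<longrightarrow>
               PR p I (p ^ n) (\<xi> ` E) \<and> \<xi> ` E \<approx> E))"
proof (intro conjI impI allI)
  have p: "p \<ge> 2" using \<open>prime p\<close> prime_ge_2_nat by blast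
  have pn: "p ^ n = p ^ (n - 1) * p"
    using \<open>n \<ge> 1\<close> power_minus_mult[of n p] by simp
  assume PR: "PR p I (p ^ n) E"
  then show "PR p I p ((\<lambda>\<gamma>. gpow \<gamma> (p ^ (n - 1))) ` E)"
    using PR_gpow_image[of p I "p ^ (n - 1)" p E] p pn by simp
  have "\<not> p ^ n dvd p ^ (n - 1)" using p \<open>n \<ge> 1\<close> by (simp add: dvd_power_iff_le)
  then show "(\<lambda>\<gamma>. gpow \<gamma> (p ^ (n - 1))) ` E \<approx> E"
    using PR_inj_on_gpow[OF PR] p inj_on_image_eqpoll_self by simp
next
  fix \<xi> assume PR: "PR p I p E"
    and \<xi>: "\<forall>\<gamma>\<in>E. \<xi> \<gamma> \<in> Gamma p I \<and> gpow (\<xi> \<gamma>) (p ^ (n - 1)) = \<gamma>"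
  show "PR p I (p ^ n) (\<xi> ` E)"
    using PR_root_image[OF PR \<xi>] \<open>n \<ge> 1\<close> by simp
  have "inj_on \<xi> E" using \<xi> by (auto intro: inj_on_inverseI)
  then show "\<xi> ` E \<approx> E" by (rule inj_on_image_eqpoll_self)
qed

end
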